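(* There is an absolute constant $K>0$ such that the following holds. Let $n\ge 1$, $k=\lfloor\sqrt n\rfloor$, and let $M_n$ be the $\binom{n}{k}\times n$ matrix whose rows are all the distinct $0/1$ vectors of length $n$ with exactly $k$ ones. Consider a bimatrix game in which the row player's payoff matrix is $M_n$ (the column player's payoff matrix is arbitrary). Then for every mixed strategy $\mathbf{x}$ of the row player there exists a column $m$ of $M_n$ such that, for every $p\in[0,1]$ and every mixed strategy $\mathbf{y}$ of the column player that assigns probability $p$ to column $m$, the row player's regret against $\mathbf{y}$ is at least $p-K/\sqrt n$, i.e. $\max_i \mathbf{e}_i^T M_n\mathbf{y}-\mathbf{x}^T M_n\mathbf{y}\ge p-K/\sqrt{n}$.
   Context: Mixed strategies are probability vectors over rows (for the row player) and columns (for the column player); the row player's payoff under $(\mathbf{x},\mathbf{y})$ is $\mathbf{x}^T M\mathbf{y}$ for his payoff matrix $M$. The regret of the row player is the difference between the payoff of his best response to $\mathbf{y}$ and his actual payoff $\mathbf{x}^TM\mathbf{y}$. *)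

theory Defs
  imports Complex_Main
begin

definition kk :: "nat \<Rightarrow> nat" where
  "kk n = nat \<lfloor>sqrt (real n)\<rfloor>"

definition rows :: "nat \<Rightarrow> nat set set" where
  "rows n = {S. S \<subseteq> {..<n} \<and> card S = kk n}"

definition Mn :: "nat set \<Rightarrow> nat \<Rightarrow> real" where
  "Mn S j = (if j \<in> S then 1 else 0)"

definition mixed :: "'a set \<Rightarrow> ('a \<Rightarrow> real) \<Rightarrow> bool" where
  "mixed A v \<longleftrightarrow> (\<forall>a\<in>A. v a \<ge> 0) \<and> sum v A = 1"

definition row_payoff :: "nat \<Rightarrow> (nat set \<Rightarrow> real) \<Rightarrow> (nat \<Rightarrow> real) \<Rightarrow> real" where
  "row_payoff n x y = (\<Sum>S\<in>rows n. \<Sum>j<n. x S * Mn S j * y j)"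

definition pure_payoff :: "nat \<Rightarrow> nat set \<Rightarrow> (nat \<Rightarrow> real) \<Rightarrow> real" where
  "pure_payoff n S y = (\<Sum>j<n. Mn S j * y j)"

definition regret :: "nat \<Rightarrow> (nat set \<Rightarrow> real) \<Rightarrow> (nat \<Rightarrow> real) \<Rightarrow> real" where
  "regret n x y = (MAX S\<in>rows n. pure_payoff n S y) - row_payoff n x y"

end

theory Submission
  imports Defs
begin

text \<open>The row strategy x induces column marginals q j = (\<Sum>S. x S * [j \<in> S]) summing
  to k, so some column m has q m \<le> k/n \<le> 1/sqrt n. Against any y with y m = p, a pure
  row S missing m is beaten by the row that exchanges the lightest column of S (weight at
  most 1/k) for m; hence e_S^T M y \<le> max - p + 1/k + p [m \<in> S]. Averaging over x gives
  regret \<ge> p - q m - 1/k \<ge> p - 3/sqrt n.\<close>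

lemma kk_bounds:
  assumes "n \<ge> 1"
  shows "1 \<le> kk n" "real (kk n) \<le> sqrt (real n)" "sqrt (real n) < real (kk n) + 1"
proof -
  have "sqrt (real n) \<ge> 1" using assms by simp
  then have floor_ge: "\<lfloor>sqrt (real n)\<rfloor> \<ge> 1" by linarith
  then have "real (kk n) = real_of_int \<lfloor>sqrt (real n)\<rfloor>" unfolding kk_def by simp
  then show "real (kk n) \<le> sqrt (real n)" "sqrt (real n) < real (kk n) + 1" by linarith+
  show "1 \<le> kk n" unfolding kk_def using floor_ge by linarith
qed

lemma finite_rows: "finite (rows n)"
  by (rule finite_subset[of _ "Pow {..<n}"]) (auto simp: rows_def)

lemma pure_payoff_eq_sum:
  assumes "S \<subseteq> {..<n}"
  shows "pure_payoff n S y = sum y S"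
proof -
  have "pure_payoff n S y = (\<Sum>j<n. if j \<in> S then y j else 0)"
    unfolding pure_payoff_def Mn_def by (intro sum.cong) auto
  also have "\<dots> = sum y ({..<n} \<inter> S)" by (simp add: sum.inter_restrict)
  finally show ?thesis using assms by (simp add: Int_absorb1)
qed

lemma row_payoff_eq_average:
  "row_payoff n x y = (\<Sum>S\<in>rows n. x S * pure_payoff n S y)"
  unfolding row_payoff_def pure_payoff_def by (simp add: sum_distrib_left mult.assoc)

lemma exists_le_average:
  fixes f :: "'a \<Rightarrow> real"
  assumes "finite A" "A \<noteq> {}"
  shows "\<exists>a\<in>A. real (card A) * f a \<le> sum f A"
proof -
  define a where "a = arg_min_on f A"
  have "a \<in> A" using arg_min_if_finite(1)[OF assms] by (simp add: a_def)
  moreover have "real (card A) * f a \<le> sum f A"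
    using sum_mono[of A "\<lambda>_. f a" f] arg_min_least[OF assms, of _ f] by (simp add: a_def)
  ultimately show ?thesis by blast
qed

lemma exchange_lightest_column:
  assumes S: "S \<in> rows n" and k: "kk n \<ge> 1" and m: "m < n" "m \<notin> S"
    and y: "mixed {..<n} y"
  shows "\<exists>S'\<in>rows n. pure_payoff n S y \<le> pure_payoff n S' y - y m + 1 / real (kk n)"
proof -
  have S_sub: "S \<subseteq> {..<n}" and card_S: "card S = kk n" using S by (auto simp: rows_def)
  have fin_S: "finite S" using S_sub finite_subset by blast
  have "S \<noteq> {}" using card_S k by auto
  then obtain j where j: "j \<in> S" and "real (kk n) * y j \<le> sum y S"
    using exists_le_average[OF fin_S] card_S by metis
  moreover have "sum y S \<le> sum y {..<n}"
    using y S_sub by (intro sum_mono2) (auto simp: mixed_def)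
  ultimately have "y j \<le> 1 / real (kk n)"
    using y k by (simp add: mixed_def field_simps)
  define S' where "S' = insert m (S - {j})"
  have S'_sub: "S' \<subseteq> {..<n}" using S_sub m by (auto simp: S'_def)
  have "card S' = kk n" using fin_S m j card_S k by (simp add: S'_def card_Diff_singleton)
  with S'_sub have "S' \<in> rows n" by (simp add: rows_def)
  moreover have "sum y S' = y m + sum y S - y j"
    using fin_S m j by (simp add: S'_def sum_diff1)
  ultimately show ?thesis
    using \<open>y j \<le> 1 / real (kk n)\<close> pure_payoff_eq_sum[OF S_sub] pure_payoff_eq_sum[OF S'_sub]
    by (intro bexI[of _ S']) auto
qed

definition column_marginal :: "nat \<Rightarrow> (nat set \<Rightarrow> real) \<Rightarrow> nat \<Rightarrow> real" where
  "column_marginal n x j = (\<Sum>S\<in>rows n. x S * Mn S j)"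

lemma column_marginal_nonneg:
  "mixed (rows n) x \<Longrightarrow> column_marginal n x j \<ge> 0"
  unfolding column_marginal_def mixed_def Mn_def by (intro sum_nonneg) auto

lemma sum_column_marginal:
  assumes "mixed (rows n) x"
  shows "(\<Sum>j<n. column_marginal n x j) = real (kk n)"
proof -
  have "(\<Sum>j<n. column_marginal n x j) = (\<Sum>S\<in>rows n. x S * pure_payoff n S (\<lambda>_. 1))"
    unfolding column_marginal_def pure_payoff_def
    by (simp add: sum.swap[of _ "{..<n}"] sum_distrib_left)
  also have "\<dots> = (\<Sum>S\<in>rows n. x S * real (kk n))"
    by (intro sum.cong refl) (simp add: pure_payoff_eq_sum rows_def)
  also have "\<dots> = real (kk n)"
    using assms by (simp add: mixed_def sum_distrib_right[symmetric])
  finally show ?thesis .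
qed

lemma exists_light_column:
  assumes "n \<ge> 1" "mixed (rows n) x"
  shows "\<exists>m<n. real n * column_marginal n x m \<le> real (kk n)"
proof -
  have "0 \<in> {..<n}" using assms(1) by simp
  then have "{..<n} \<noteq> {}" by blast
  then show ?thesis
    using exists_le_average[of "{..<n}" "column_marginal n x"] sum_column_marginal[OF assms(2)]
    by auto
qed

lemma pure_payoff_le_Max:
  "S \<in> rows n \<Longrightarrow> pure_payoff n S y \<le> (MAX S\<in>rows n. pure_payoff n S y)"
  using finite_rows by simp

lemma pure_payoff_le_Max_exchange:
  assumes S: "S \<in> rows n" and k: "kk n \<ge> 1" and m: "m < n" and y: "mixed {..<n} y"
  shows "pure_payoff n S y
    \<le> (MAX S\<in>rows n. pure_payoff n S y) + 1 / real (kk n) - y m + y m * Mn S m"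
proof (cases "m \<in> S")
  case True
  then show ?thesis using pure_payoff_le_Max[OF S, of y] by (simp add: Mn_def add_increasing2)
next
  case False
  then obtain S' where "S' \<in> rows n"
      "pure_payoff n S y \<le> pure_payoff n S' y - y m + 1 / real (kk n)"
    using exchange_lightest_column[OF S k m False y] by blast
  then show ?thesis using False pure_payoff_le_Max[of S' n y] by (simp add: Mn_def)
qed

lemma regret_ge:
  assumes k: "kk n \<ge> 1" and x: "mixed (rows n) x" and m: "m < n" and y: "mixed {..<n} y"
  shows "regret n x y \<ge> y m - column_marginal n x m - 1 / real (kk n)"
proof -
  define c where "c = (MAX S\<in>rows n. pure_payoff n S y) + 1 / real (kk n) - y m"
  have "row_payoff n x y \<le> (\<Sum>S\<in>rows n. x S * (c + y m * Mn S m))"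
    unfolding row_payoff_eq_average c_def using x pure_payoff_le_Max_exchange[OF _ k m y]
    by (intro sum_mono mult_left_mono) (auto simp: mixed_def)
  also have "\<dots> = c * sum x (rows n) + y m * column_marginal n x m"
    by (simp add: column_marginal_def distrib_left sum.distrib sum_distrib_left
        sum_distrib_right mult.assoc mult.left_commute mult.commute)
  finally have "row_payoff n x y \<le> c + y m * column_marginal n x m"
    using x by (simp add: mixed_def)
  moreover have "y m * column_marginal n x m \<le> column_marginal n x m"
    using y m column_marginal_nonneg[OF x] member_le_sum[of m "{..<n}" y]
    by (intro mult_left_le_one_le) (auto simp: mixed_def)
  ultimately show ?thesis unfolding regret_def c_def by linarith
qed

theorem lemma1:
  shows "\<exists>K::real. K > 0 \<and>
    (\<forall>n::nat. n \<ge> 1 \<longrightarrow>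
      (\<forall>x. mixed (rows n) x \<longrightarrow>
        (\<exists>m<n. \<forall>p::real. 0 \<le> p \<and> p \<le> 1 \<longrightarrow>
          (\<forall>y. mixed {..<n} y \<and> y m = p \<longrightarrow>
             regret n x y \<ge> p - K / sqrt (real n)))))"
proof (rule exI[of _ "3::real"], intro conjI allI impI)
  fix n :: nat and x
  assume n: "n \<ge> 1" and x: "mixed (rows n) x"
  note k = kk_bounds[OF n]
  have sqrt_pos: "sqrt (real n) > 0" using n by simp
  obtain m where m: "m < n" and light: "real n * column_marginal n x m \<le> real (kk n)"
    using exists_light_column[OF n x] by blast
  have "column_marginal n x m \<le> real (kk n) / real n"
    using light n by (simp add: field_simps)
  also have "\<dots> \<le> sqrt (real n) / real n"
    using k(2) by (simp add: divide_right_mono)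
  also have "\<dots> = 1 / sqrt (real n)"
    using sqrt_pos by (simp add: field_simps flip: real_sqrt_mult)
  finally have marginal_small: "column_marginal n x m \<le> 1 / sqrt (real n)" .
  have "sqrt (real n) \<le> 2 * real (kk n)" using k by linarith
  then have "1 / real (kk n) \<le> 2 / sqrt (real n)"
    using k(1) sqrt_pos by (simp add: divide_simps)
  then have "regret n x y \<ge> y m - 3 / sqrt (real n)" if "mixed {..<n} y" for y
    using regret_ge[OF k(1) x m that] marginal_small by linarith
  then show "\<exists>m<n. \<forall>p. 0 \<le> p \<and> p \<le> 1 \<longrightarrow>
      (\<forall>y. mixed {..<n} y \<and> y m = p \<longrightarrow> regret n x y \<ge> p - 3 / sqrt (real n))"
    using m by blast
qed simp

end
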